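(* For $n\ge 1$ let $\varphi_n:=\forall x\forall y\,\big(\bigwedge_{i<n}(p_i(x)\leftrightarrow p_i(y))\to(p_n(x)\leftrightarrow p_n(y))\big)$, a formula of $\mathcal{FO}^m_{\mathrm{RCC8}}$. Then every $\mathcal{L}_{\mathrm{RCC8}}$-formula $\psi_n$ that is equivalent to $\varphi_n$ on the class $\mathcal{RS}$ of all region structures (i.e., for every region model $\mathfrak M$ based on a structure in $\mathcal{RS}$ and every region $s$, $\mathfrak M,s\models\psi_n$ iff $\mathfrak M\models\varphi_n$) has length $2^{\Omega(n)}$.
   Context: A (general) region structure is a relational structure $\langle W,\mathrm{dc},\mathrm{ec},\mathrm{po},\mathrm{eq},\mathrm{tpp},\mathrm{ntpp},\mathrm{tppi},\mathrm{ntppi}\rangle$ with $W\ne\emptyset$, whose eight binary relations are mutually disjoint and jointly exhaustive on $W\times W$, with $\mathrm{eq}$ the identity, $\mathrm{dc},\mathrm{ec},\mathrm{po}$ symmetric, $\mathrm{tppi},\mathrm{ntppi}$ the inverses of $\mathrm{tpp},\mathrm{ntpp}$, and satisfying the standard RCC8 composition table; $\mathcal{RS}$ is the class of all of them. $\mathcal{L}_{\mathrm{RCC8}}$ is the modal language with propositional variables $p_1,p_2,\dots$ (and $p_0$), $\neg,\wedge$, and box operators $[r]$ for each of the eight relations, interpreted in region models (region structure plus valuation $p_i^{\mathfrak M}\subseteq W$) by $\mathfrak M,s\models[r]\varphi$ iff $\mathfrak M,t\models\varphi$ for all $t$ with $(s,t)\in r$. $\mathcal{FO}^m_{\mathrm{RCC8}}$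 is first-order logic with equality, eight binary predicates for the relations and unary predicates $p_0,p_1,\dots$, interpreted in region models in the obvious way. *)

theory Defs
  imports Complex_Main
begin

datatype rcc = DC | EC | PO | TPP | NTPP | TPPi | NTPPi | EQ

definition all_rcc :: "rcc set" where
  "all_rcc = {DC, EC, PO, TPP, NTPP, TPPi, NTPPi, EQ}"

text \<open>Standard RCC8 composition table: comp r s is the set of relations that
  may hold between x and y when x r z and z s y.\<close>
fun comp :: "rcc \<Rightarrow> rcc \<Rightarrow> rcc set" where
  "comp EQ s = {s}"
| "comp r EQ = {r}"
| "comp DC DC = all_rcc"
| "comp DC EC = {DC, EC, PO, TPP, NTPP}"
| "comp DC PO = {DC, EC, PO, TPP, NTPP}"
| "comp DC TPP = {DC, EC, PO, TPP, NTPP}"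
| "comp DC NTPP = {DC, EC, PO, TPP, NTPP}"
| "comp DC TPPi = {DC}"
| "comp DC NTPPi = {DC}"
| "comp EC DC = {DC, EC, PO, TPPi, NTPPi}"
| "comp EC EC = {DC, EC, PO, TPP, TPPi, EQ}"
| "comp EC PO = {DC, EC, PO, TPP, NTPP}"
| "comp EC TPP = {EC, PO, TPP, NTPP}"
| "comp EC NTPP = {PO, TPP, NTPP}"
| "comp EC TPPi = {DC, EC}"
| "comp EC NTPPi = {DC}"
| "comp PO DC = {DC, EC, PO, TPPi, NTPPi}"
| "comp PO EC = {DC, EC, PO, TPPi, NTPPi}"
| "comp PO PO = all_rcc"
| "comp PO TPP = {PO, TPP, NTPP}"
| "comp PO NTPP = {PO, TPP, NTPP}"
| "comp PO TPPi = {DC, EC, PO, TPPi, NTPPi}"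
| "comp PO NTPPi = {DC, EC, PO, TPPi, NTPPi}"
| "comp TPP DC = {DC}"
| "comp TPP EC = {DC, EC}"
| "comp TPP PO = {DC, EC, PO, TPP, NTPP}"
| "comp TPP TPP = {TPP, NTPP}"
| "comp TPP NTPP = {NTPP}"
| "comp TPP TPPi = {DC, EC, PO, TPP, TPPi, EQ}"
| "comp TPP NTPPi = {DC, EC, PO, TPPi, NTPPi}"
| "comp NTPP DC = {DC}"
| "comp NTPP EC = {DC}"
| "comp NTPP PO = {DC, EC, PO, TPP, NTPP}"
| "comp NTPP TPP = {NTPP}"
| "comp NTPP NTPP = {NTPP}"
| "comp NTPP TPPi = {DC, EC, PO, TPP, NTPP}"
| "comp NTPP NTPPi = all_rcc"
| "comp TPPi DC = {DC, EC, PO, TPPi, NTPPi}"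
| "comp TPPi EC = {EC, PO, TPPi, NTPPi}"
| "comp TPPi PO = {PO, TPPi, NTPPi}"
| "comp TPPi TPP = {PO, TPP, TPPi, EQ}"
| "comp TPPi NTPP = {PO, TPP, NTPP}"
| "comp TPPi TPPi = {TPPi, NTPPi}"
| "comp TPPi NTPPi = {NTPPi}"
| "comp NTPPi DC = {DC, EC, PO, TPPi, NTPPi}"
| "comp NTPPi EC = {PO, TPPi, NTPPi}"
| "comp NTPPi PO = {PO, TPPi, NTPPi}"
| "comp NTPPi TPP = {PO, TPPi, NTPPi}"
| "comp NTPPi NTPP = {PO, TPP, NTPP, TPPi, NTPPi, EQ}"
| "comp NTPPi TPPi = {NTPPi}"
| "comp NTPPi NTPPi = {NTPPi}"

definition region_structure :: "'w set \<Rightarrow> (rcc \<Rightarrow> 'w \<Rightarrow> 'w \<Rightarrow> bool) \<Rightarrow> bool" where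
  "region_structure W R \<longleftrightarrow>
     W \<noteq> {}
   \<and> (\<forall>r x y. R r x y \<longrightarrow> x \<in> W \<and> y \<in> W)
   \<and> (\<forall>x\<in>W. \<forall>y\<in>W. \<exists>!r. R r x y)
   \<and> (\<forall>x\<in>W. \<forall>y\<in>W. R EQ x y \<longleftrightarrow> x = y)
   \<and> (\<forall>x y. R DC x y \<longrightarrow> R DC y x)
   \<and> (\<forall>x y. R EC x y \<longrightarrow> R EC y x)
   \<and> (\<forall>x y. R PO x y \<longrightarrow> R PO y x)
   \<and> (\<forall>x y. R TPPi x y \<longleftrightarrow> R TPP y x)
   \<and> (\<forall>x y. R NTPPi x y \<longleftrightarrow> R NTPP y x)
   \<and> (\<forall>r s x y z. R r x z \<longrightarrow> R s z y \<longrightarrow> (\<exists>t\<in>comp r s. R t x y))"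

datatype fm = Var nat | Neg fm | Conj fm fm | Box rcc fm

fun sat :: "(rcc \<Rightarrow> 'w \<Rightarrow> 'w \<Rightarrow> bool) \<Rightarrow> (nat \<Rightarrow> 'w set) \<Rightarrow> 'w \<Rightarrow> fm \<Rightarrow> bool" where
  "sat R V s (Var i) \<longleftrightarrow> s \<in> V i"
| "sat R V s (Neg f) \<longleftrightarrow> \<not> sat R V s f"
| "sat R V s (Conj f g) \<longleftrightarrow> sat R V s f \<and> sat R V s g"
| "sat R V s (Box r f) \<longleftrightarrow> (\<forall>t. R r s t \<longrightarrow> sat R V t f)"

fun fm_len :: "fm \<Rightarrow> nat" where
  "fm_len (Var i) = 1"
| "fm_len (Neg f) = 1 + fm_len f"
| "fm_len (Conj f g) = 1 + fm_len f + fm_len g"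
| "fm_len (Box r f) = 1 + fm_len f"

section \<open>The first-order sentence phi_n (its truth condition in a region model)\<close>

definition phi_holds :: "'w set \<Rightarrow> (nat \<Rightarrow> 'w set) \<Rightarrow> nat \<Rightarrow> bool" where
  "phi_holds W V n \<longleftrightarrow>
     (\<forall>x\<in>W. \<forall>y\<in>W. (\<forall>i<n. x \<in> V i \<longleftrightarrow> y \<in> V i) \<longrightarrow> (x \<in> V n \<longleftrightarrow> y \<in> V n))"

definition equiv_RS :: "fm \<Rightarrow> nat \<Rightarrow> bool" where
  "equiv_RS \<psi> n \<longleftrightarrow>
     (\<forall>(W::nat set) R V. region_structure W R \<longrightarrow> (\<forall>i. V i \<subseteq> W) \<longrightarrow>
        (\<forall>s\<in>W. sat R V s \<psi> \<longleftrightarrow> phi_holds W V n))"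

end

theory Submission
  imports Defs
begin

text \<open>It suffices to consider region structures in which any two distinct regions are DC.
  There a modal formula only sees the set \<open>S\<close> of labels (sets of true variables) that are
  realised, each at least twice: \<open>[DC]\<close> ranges over all of \<open>S\<close>, \<open>[EQ]\<close> is the identity and the
  other boxes are vacuous. In these terms \<open>\<phi>\<^sub>n\<close> says that \<open>S\<close> is the graph of a Boolean
  function of \<open>p\<^sub>0, \<dots>, p\<^sub>n\<^sub>-\<^sub>1\<close>, recorded in \<open>p\<^sub>n\<close>. The truth of \<open>\<psi>\<close> at a label
  depends only on which \<open>[DC]\<close>-subformulas of \<open>\<psi>\<close> are valid in \<open>S\<close>, so adding a label that
  satisfies all of them does not change \<open>\<psi>\<close>. Adding to the graph of \<open>f\<close> the point of the graph
  of \<open>g\<close> where \<open>g\<close> differs from \<open>f\<close> destroys \<open>\<phi>\<^sub>n\<close>; hence some \<open>[DC]\<close>-subformula valid for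
  \<open>f\<close> fails at that point, and as the point lies on the graph of \<open>g\<close>, the functions \<open>f\<close> and \<open>g\<close>
  cannot make the same \<open>[DC]\<close>-subformulas valid. There are \<open>2^(2^n)\<close> functions, so \<open>\<psi>\<close> has
  at least \<open>2^n\<close> \<open>[DC]\<close>-subformulas.\<close>

fun label_sat :: "nat set set \<Rightarrow> nat set \<Rightarrow> fm \<Rightarrow> bool" where
  "label_sat S l (Var i) \<longleftrightarrow> i \<in> l"
| "label_sat S l (Neg f) \<longleftrightarrow> \<not> label_sat S l f"
| "label_sat S l (Conj f g) \<longleftrightarrow> label_sat S l f \<and> label_sat S l g"
| "label_sat S l (Box r f) \<longleftrightarrow>
     (if r = DC then \<forall>l'\<in>S. label_sat S l' f else if r = EQ then label_sat S l f else True)"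

definition label_valid :: "nat set set \<Rightarrow> fm \<Rightarrow> bool" where
  "label_valid S f \<longleftrightarrow> (\<forall>l\<in>S. label_sat S l f)"

fun dc_subfms :: "fm \<Rightarrow> fm set" where
  "dc_subfms (Var i) = {}"
| "dc_subfms (Neg f) = dc_subfms f"
| "dc_subfms (Conj f g) = dc_subfms f \<union> dc_subfms g"
| "dc_subfms (Box r f) = (if r = DC then insert f (dc_subfms f) else dc_subfms f)"

lemma finite_dc_subfms: "finite (dc_subfms f)"
  by (induction f) auto

lemma card_dc_subfms_le_fm_len: "card (dc_subfms f) \<le> fm_len f"
proof (induction f)
  case (Conj f g)
  then show ?case using card_Un_le[of "dc_subfms f" "dc_subfms g"] by simp
next
  case (Box r f)
  then show ?case using card_insert_le_m1[of "fm_len f + 1" "dc_subfms f" f] finite_dc_subfms[of f]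
    by (auto simp: card_insert_if)
qed auto

lemma dc_subfms_trans: "g \<in> dc_subfms f \<Longrightarrow> dc_subfms g \<subseteq> dc_subfms f"
  by (induction f) (auto split: if_splits)

fun oracle_sat :: "(fm \<Rightarrow> bool) \<Rightarrow> nat set \<Rightarrow> fm \<Rightarrow> bool" where
  "oracle_sat b l (Var i) \<longleftrightarrow> i \<in> l"
| "oracle_sat b l (Neg f) \<longleftrightarrow> \<not> oracle_sat b l f"
| "oracle_sat b l (Conj f g) \<longleftrightarrow> oracle_sat b l f \<and> oracle_sat b l g"
| "oracle_sat b l (Box r f) \<longleftrightarrow>
     (if r = DC then b f else if r = EQ then oracle_sat b l f else True)"

lemma label_sat_eq_oracle_sat: "label_sat S l f = oracle_sat (label_valid S) l f"
  by (induction f arbitrary: l) (auto simp: label_valid_def)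

lemma oracle_sat_cong: "(\<And>h. h \<in> dc_subfms g \<Longrightarrow> b h = b' h) \<Longrightarrow> oracle_sat b l g = oracle_sat b' l g"
  by (induction g arbitrary: l) auto

definition valid_dc_subfms :: "fm \<Rightarrow> nat set set \<Rightarrow> fm set" where
  "valid_dc_subfms \<psi> S = {g \<in> dc_subfms \<psi>. label_valid S g}"

lemma label_sat_eq_if_valid_dc_subfms_eq:
  assumes "valid_dc_subfms \<psi> S = valid_dc_subfms \<psi> S'" and "g \<in> dc_subfms \<psi>"
  shows "label_sat S l g = label_sat S' l g"
proof -
  have "label_valid S h = label_valid S' h" if "h \<in> dc_subfms g" for h
    using assms dc_subfms_trans[OF assms(2)] that unfolding valid_dc_subfms_def by blast
  then show ?thesis
    unfolding label_sat_eq_oracle_sat by (rule oracle_sat_cong)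
qed

lemma label_sat_insert:
  assumes "\<And>g. g \<in> dc_subfms f \<Longrightarrow> label_valid S g \<Longrightarrow> label_sat S u g"
  shows "label_sat (insert u S) l f = label_sat S l f"
  using assms by (induction f arbitrary: l) (auto simp: label_valid_def)

definition dc_clique :: "'w set \<Rightarrow> rcc \<Rightarrow> 'w \<Rightarrow> 'w \<Rightarrow> bool" where
  "dc_clique W r x y \<longleftrightarrow> x \<in> W \<and> y \<in> W \<and> (if x = y then r = EQ else r = DC)"

lemma region_structure_dc_clique:
  assumes "W \<noteq> {}"
  shows "region_structure W (dc_clique W)"
  unfolding region_structure_def
proof (intro conjI)
  show "\<forall>r s x y z. dc_clique W r x z \<longrightarrow> dc_clique W s z y \<longrightarrow> (\<exists>t\<in>comp r s. dc_clique W t x y)"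
  proof (intro allI impI)
    fix r s x y z assume xz: "dc_clique W r x z" and zy: "dc_clique W s z y"
    consider "x = z" | "z = y" | "x \<noteq> z" "z \<noteq> y" by blast
    then show "\<exists>t\<in>comp r s. dc_clique W t x y"
    proof cases
      case 1
      then show ?thesis using xz zy by (auto simp: dc_clique_def)
    next
      case 2
      then have "s = EQ" using zy by (simp add: dc_clique_def)
      then have "comp r s = {r}" by (cases r) auto
      then show ?thesis using 2 xz by simp
    next
      case 3
      then have "r = DC" "s = DC" using xz zy by (auto simp: dc_clique_def)
      then show ?thesis using xz zy by (auto simp: dc_clique_def all_rcc_def)
    qed
  qed
qed (use assms in \<open>auto simp: dc_clique_def\<close>)

text \<open>Each label must be realised at a second world, so that \<open>[DC]\<close> at a world still sees its
  own label.\<close>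
lemma sat_dc_clique:
  assumes lab_in: "\<And>x. x \<in> W \<Longrightarrow> lab x \<in> S"
    and twin: "\<And>x a. a \<in> S \<Longrightarrow> \<exists>y\<in>W. y \<noteq> x \<and> lab y = a"
    and "x \<in> W"
  shows "sat (dc_clique W) (\<lambda>i. {y \<in> W. i \<in> lab y}) x f = label_sat S (lab x) f"
  using \<open>x \<in> W\<close>
proof (induction f arbitrary: x)
  case (Box r f)
  consider "r = DC" | "r = EQ" | "r \<noteq> DC" "r \<noteq> EQ" by blast
  then show ?case
  proof cases
    case 1
    have "(\<forall>y. dc_clique W DC x y \<longrightarrow> label_sat S (lab y) f) \<longleftrightarrow> (\<forall>a\<in>S. label_sat S a f)"
    proof
      assume all_y: "\<forall>y. dc_clique W DC x y \<longrightarrow> label_sat S (lab y) f"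
      show "\<forall>a\<in>S. label_sat S a f"
      proof
        fix a assume "a \<in> S"
        then obtain y where "y \<in> W" "y \<noteq> x" "lab y = a" using twin by blast
        then show "label_sat S a f" using all_y Box.prems by (auto simp: dc_clique_def)
      qed
    qed (auto simp: dc_clique_def lab_in)
    then show ?thesis using 1 Box by (auto simp: dc_clique_def)
  next
    case 2
    then show ?thesis using Box by (auto simp: dc_clique_def)
  next
    case 3
    then show ?thesis by (simp add: dc_clique_def)
  qed
qed simp_all

definition phi_labels :: "nat set set \<Rightarrow> nat \<Rightarrow> bool" where
  "phi_labels S n \<longleftrightarrow> (\<forall>a\<in>S. \<forall>b\<in>S. (\<forall>i<n. i \<in> a \<longleftrightarrow> i \<in> b) \<longrightarrow> (n \<in> a \<longleftrightarrow> n \<in> b))"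

lemma phi_holds_image:
  assumes "lab ` W = S"
  shows "phi_holds W (\<lambda>i. {y \<in> W. i \<in> lab y}) n = phi_labels S n"
  using assms unfolding phi_holds_def phi_labels_def by auto

lemma equiv_RS_label_sat:
  assumes "equiv_RS \<psi> n" and "finite S" and "l \<in> S"
  shows "label_sat S l \<psi> \<longleftrightarrow> phi_labels S n"
proof -
  obtain h where h: "bij_betw h {..<card S} S"
    using ex_bij_betw_nat_finite[OF \<open>finite S\<close>] by (auto simp: atLeast0LessThan)
  define W where "W = {..<2 * card S}"
  define lab where "lab j = h (j div 2)" for j
  define V where "V i = {y \<in> W. i \<in> lab y}" for i
  have lab_in: "lab x \<in> S" if "x \<in> W" for x
    using that h unfolding W_def lab_def bij_betw_def by auto
  have twin: "\<exists>y\<in>W. y \<noteq> x \<and> lab y = a" if "a \<in> S" for x a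
  proof -
    have "a \<in> h ` {..<card S}" using h \<open>a \<in> S\<close> by (simp add: bij_betw_def)
    then obtain k where "k < card S" "h k = a" by auto
    then have k: "2 * k \<in> W" "2 * k + 1 \<in> W" "lab (2 * k) = a" "lab (2 * k + 1) = a"
      unfolding W_def lab_def by auto
    show ?thesis
    proof (cases "x = 2 * k")
      case True
      then show ?thesis using k by (intro bexI[of _ "2 * k + 1"]) auto
    next
      case False
      then show ?thesis using k by (intro bexI[of _ "2 * k"]) auto
    qed
  qed
  obtain x where x: "x \<in> W" "lab x = l" using twin[OF \<open>l \<in> S\<close>] by blast
  have "lab ` W = S"
  proof
    show "lab ` W \<subseteq> S" using lab_in by blast
    show "S \<subseteq> lab ` W"
    proof
      fix a assume "a \<in> S"
      then obtain y where "y \<in> W" "lab y = a" using twin by blast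
      then show "a \<in> lab ` W" by blast
    qed
  qed
  then have "phi_labels S n \<longleftrightarrow> phi_holds W V n"
    unfolding V_def by (simp add: phi_holds_image)
  also have "\<dots> \<longleftrightarrow> sat (dc_clique W) V x \<psi>"
  proof -
    have "W \<noteq> {}" using x(1) by blast
    moreover have "\<forall>i. V i \<subseteq> W" unfolding V_def by blast
    ultimately show ?thesis
      using \<open>equiv_RS \<psi> n\<close> region_structure_dc_clique x(1) unfolding equiv_RS_def by metis
  qed
  also have "\<dots> \<longleftrightarrow> label_sat S l \<psi>"
    using sat_dc_clique[OF lab_in twin x(1)] x(2) unfolding V_def by simp
  finally show ?thesis ..
qed

lemma dc_subfm_separates:
  assumes "equiv_RS \<psi> n" and "finite S" and "S \<noteq> {}"
    and "phi_labels S n" and "\<not> phi_labels (insert u S) n"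
  shows "\<exists>g\<in>dc_subfms \<psi>. label_valid S g \<and> \<not> label_sat S u g"
proof (rule ccontr)
  assume "\<not> ?thesis"
  then have "label_sat (insert u S) l \<psi> = label_sat S l \<psi>" for l
    by (intro label_sat_insert) blast
  moreover obtain l where "l \<in> S" using \<open>S \<noteq> {}\<close> by blast
  ultimately show False
    using assms equiv_RS_label_sat[of \<psi> n S l] equiv_RS_label_sat[of \<psi> n "insert u S" l] by auto
qed

lemma valid_dc_subfms_neq:
  assumes "equiv_RS \<psi> n" and "finite S" and "S \<noteq> {}"
    and "phi_labels S n" and "\<not> phi_labels (insert u S) n" and "u \<in> S'"
  shows "valid_dc_subfms \<psi> S \<noteq> valid_dc_subfms \<psi> S'"
proof
  assume eq: "valid_dc_subfms \<psi> S = valid_dc_subfms \<psi> S'"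
  obtain g where g: "g \<in> dc_subfms \<psi>" "label_valid S g" "\<not> label_sat S u g"
    using dc_subfm_separates[OF assms(1-5)] by blast
  then have "label_valid S' g" using eq unfolding valid_dc_subfms_def by blast
  then have "label_sat S' u g" using \<open>u \<in> S'\<close> unfolding label_valid_def by blast
  then show False using g label_sat_eq_if_valid_dc_subfms_eq[OF eq g(1)] by simp
qed

text \<open>The graph of the Boolean function with support \<open>A\<close>; the value is stored in variable \<open>n\<close>.\<close>
definition graph_label :: "nat \<Rightarrow> nat set set \<Rightarrow> nat set \<Rightarrow> nat set" where
  "graph_label n A \<tau> = (if \<tau> \<in> A then insert n \<tau> else \<tau>)"

definition graph_labels :: "nat \<Rightarrow> nat set set \<Rightarrow> nat set set" where
  "graph_labels n A = graph_label n A ` Pow {..<n}"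

lemma graph_label_below: "i < n \<Longrightarrow> i \<in> graph_label n A \<tau> \<longleftrightarrow> i \<in> \<tau>"
  by (simp add: graph_label_def)

lemma phi_labels_graph_labels: "phi_labels (graph_labels n A) n"
proof -
  have "\<tau> = \<tau>'" if "\<tau> \<subseteq> {..<n}" "\<tau>' \<subseteq> {..<n}" "\<forall>i<n. i \<in> \<tau> \<longleftrightarrow> i \<in> \<tau>'" for \<tau> \<tau>'
    using that by blast
  then show ?thesis
    unfolding phi_labels_def graph_labels_def by (auto simp: graph_label_below)
qed

lemma graph_label_at: "n \<notin> \<tau> \<Longrightarrow> n \<in> graph_label n A \<tau> \<longleftrightarrow> \<tau> \<in> A"
  by (simp add: graph_label_def)

lemma not_phi_labels_insert_graph_label:
  assumes "\<tau> \<subseteq> {..<n}" and "\<tau> \<in> A \<longleftrightarrow> \<tau> \<notin> A'"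
  shows "\<not> phi_labels (insert (graph_label n A' \<tau>) (graph_labels n A)) n"
proof -
  let ?a = "graph_label n A \<tau>" and ?b = "graph_label n A' \<tau>"
  have "?a \<in> graph_labels n A" using assms(1) by (simp add: graph_labels_def)
  moreover have "\<forall>i<n. i \<in> ?a \<longleftrightarrow> i \<in> ?b" by (simp add: graph_label_below)
  moreover have "n \<notin> \<tau>" using assms(1) by auto
  then have "n \<in> ?a \<longleftrightarrow> n \<notin> ?b" using assms(2) by (simp add: graph_label_at)
  ultimately show ?thesis unfolding phi_labels_def by blast
qed

lemma fm_len_ge_two_power:
  assumes "equiv_RS \<psi> n"
  shows "2 ^ n \<le> fm_len \<psi>"
proof -
  let ?P = "Pow {..<n}" and ?F = "\<lambda>A. valid_dc_subfms \<psi> (graph_labels n A)"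
  have "?F A \<noteq> ?F A'" if "A \<subseteq> ?P" "A' \<subseteq> ?P" "A \<noteq> A'" for A A'
  proof -
    from that obtain \<tau> where \<tau>: "\<tau> \<subseteq> {..<n}" "\<tau> \<in> A \<longleftrightarrow> \<tau> \<notin> A'" by blast
    have "finite (graph_labels n A)" "graph_labels n A \<noteq> {}"
      by (auto simp: graph_labels_def)
    moreover have "graph_label n A' \<tau> \<in> graph_labels n A'"
      using \<tau>(1) by (simp add: graph_labels_def)
    ultimately show ?thesis
      by (rule valid_dc_subfms_neq[OF assms _ _ phi_labels_graph_labels
            not_phi_labels_insert_graph_label[OF \<tau>]])
  qed
  then have "inj_on ?F (Pow ?P)"
    by (meson PowD inj_onI)
  moreover have "?F ` Pow ?P \<subseteq> Pow (dc_subfms \<psi>)"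
    by (auto simp: valid_dc_subfms_def)
  ultimately have "card (Pow ?P) \<le> card (Pow (dc_subfms \<psi>))"
    by (intro card_inj_on_le) (simp_all add: finite_dc_subfms)
  then have "(2::nat) ^ 2 ^ n \<le> 2 ^ card (dc_subfms \<psi>)"
    by (simp add: card_Pow finite_dc_subfms)
  then show ?thesis
    using card_dc_subfms_le_fm_len[of \<psi>] by simp
qed

theorem theorem3p2:
  shows "\<exists>c::real. c > 0 \<and> (\<exists>N::nat. \<forall>n\<ge>N. \<forall>\<psi>. n \<ge> 1 \<longrightarrow> equiv_RS \<psi> n \<longrightarrow>
            real (fm_len \<psi>) \<ge> 2 powr (c * real n))"
proof (intro exI conjI allI impI)
  show "(1::real) > 0" by simp
  fix n :: nat and \<psi> assume "equiv_RS \<psi> n"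
  then have "2 ^ n \<le> fm_len \<psi>" by (rule fm_len_ge_two_power)
  then have "(2::real) ^ n \<le> real (fm_len \<psi>)"
    by (metis numeral_power_le_of_nat_cancel_iff)
  then show "real (fm_len \<psi>) \<ge> 2 powr (1 * real n)"
    by (simp add: powr_realpow)
qed

end
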